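(* There exists a universal constant $c>0$ such that for every Boolean function $f:\Omega^\infty\to\Omega$ (not necessarily finitary) with $\delta:=\sup_iI_i(f)>0$, $$I(f)\ge c\,\mathrm{Var}(f)\log\frac1\delta.$$
   Context: Let $\Omega=\{-1,1\}$ and $\Omega^\infty=\{-1,1\}^{\mathbb N}$ with the uniform product probability measure; $\omega$ denotes a uniformly random element. A Boolean function is a measurable map $f:\Omega^\infty\to\Omega$. $\omega^{(k)}$ is $\omega$ with bit $k$ flipped; $I_k(f)=\mathbb P(f(\omega^{(k)})\ne f(\omega))$ and $I(f)=\sum_kI_k(f)$. $\log$ is the natural logarithm. *)

theory Defs
  imports "HOL-Probability.Probability"
begin

text \<open>The infinite cube: coordinates in bool (True ~ 1, False ~ -1), uniform product measure.\<close>
definition cube :: "(nat \<Rightarrow> bool) measure" where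
  "cube = PiM (UNIV :: nat set) (\<lambda>_. measure_pmf (bernoulli_pmf (1/2)))"

definition flip :: "nat \<Rightarrow> (nat \<Rightarrow> bool) \<Rightarrow> (nat \<Rightarrow> bool)" where
  "flip k \<omega> = fun_upd \<omega> k (\<not> \<omega> k)"

definition boolean_fun :: "((nat \<Rightarrow> bool) \<Rightarrow> real) \<Rightarrow> bool" where
  "boolean_fun f \<longleftrightarrow> f \<in> borel_measurable cube \<and> (\<forall>\<omega>. f \<omega> \<in> {-1, 1})"

definition influence :: "nat \<Rightarrow> ((nat \<Rightarrow> bool) \<Rightarrow> real) \<Rightarrow> real" where
  "influence k f = measure cube {\<omega> \<in> space cube. f (flip k \<omega>) \<noteq> f \<omega>}"

definition total_influence :: "((nat \<Rightarrow> bool) \<Rightarrow> real) \<Rightarrow> ennreal" where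
  "total_influence f = (\<Sum>k. ennreal (influence k f))"

definition Var :: "((nat \<Rightarrow> bool) \<Rightarrow> real) \<Rightarrow> real" where
  "Var f = (\<integral>\<omega>. (f \<omega> - (\<integral>\<eta>. f \<eta> \<partial>cube))\<^sup>2 \<partial>cube)"

end

theory Submission
  imports Defs
begin

(* If f depends only on finitely many coordinates, write f = sum_S c(S) chi_S in the Walsh
   basis. Every nonempty S satisfies 1 <= |S| (1/d + 3^(d - |S|)), hence
     Var f <= sum_k [ (1/d) sum_{S containing k} c(S)^2 + 3^d sum_{S containing k} 3^(-|S|) c(S)^2 ].
   The first inner sum is E[(D_k f)^2] <= I_k. The second is E[D_k f * T(D_k f)] for a noise
   operator T; as D_k f takes values in {-1, 0, 1}, Hoelder's inequality together with Bonami's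
   hypercontractive bound ||T g||_4 <= ||g||_2 bounds it by I_k^(3/2) <= I_k sqrt(delta).
   The choice d = ln(1/delta) / (4 ln 3) then gives Var f * ln(1/delta) <= 12 I(f).
   A general f is reached through its conditional expectations given the first n coordinates:
   these depend on finitely many coordinates and converge to f in L^1, by a Dynkin argument
   starting from cylinder sets. *)

section \<open>The uniform measure on the cube\<close>

abbreviation coin :: "bool measure" where
  "coin \<equiv> measure_pmf (bernoulli_pmf (1/2))"

interpretation Cube: sequence_space coin
  by unfold_locales

lemma cube_eq_sequence_space: "cube = Cube.S"
  by (simp add: cube_def)

lemma space_cube [simp]: "space cube = UNIV"
  by (simp add: cube_def space_PiM)

interpretation cube: prob_space cube
  unfolding cube_eq_sequence_space by (rule Cube.P.prob_space_axioms)

lemma measurable_coordinate [measurable]: "(\<lambda>\<omega>. \<omega> i) \<in> measurable cube (count_space UNIV)"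
  unfolding cube_def by (rule measurable_compose[OF measurable_component_singleton]) auto

lemma measurable_flip [measurable]: "flip k \<in> measurable cube cube"
proof -
  have coin: "measurable cube coin = measurable cube (count_space UNIV)"
    by (rule measurable_cong_sets) auto
  have "(\<lambda>\<omega>. flip k \<omega> i) \<in> measurable cube coin" for i
    unfolding coin flip_def by simp
  then show ?thesis
    by (subst (2) cube_def, intro measurable_PiM_single') auto
qed

lemma emeasure_coin_vimage_Not: "emeasure coin (Not -` X) = emeasure coin X"
proof -
  have "(\<Sum>b\<in>Not -` X. pmf (bernoulli_pmf (1/2)) b) = (\<Sum>b\<in>X. pmf (bernoulli_pmf (1/2)) b)"
    by (rule sum.reindex_bij_witness[of _ Not Not]) auto
  then show ?thesis by (simp add: emeasure_measure_pmf_finite)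
qed

lemma distr_flip_cube: "distr cube cube (flip k) = cube"
  unfolding cube_eq_sequence_space
proof (rule Cube.PiM_eq)
  fix J :: "nat set" and F :: "nat \<Rightarrow> bool set"
  assume J: "finite J" "J \<subseteq> UNIV" "\<And>j. j \<in> J \<Longrightarrow> F j \<in> sets coin"
  let ?F = "\<lambda>j. if j = k then Not -` F j else F j"
  have cylinder: "prod_emb UNIV (\<lambda>_. coin) J (Pi\<^sub>E J G) = {\<omega>. \<forall>i\<in>J. \<omega> i \<in> G i}" for G
    by (auto simp: prod_emb_def PiE_iff)
  have "flip k -` prod_emb UNIV (\<lambda>_. coin) J (Pi\<^sub>E J F) \<inter> space Cube.S
      = prod_emb UNIV (\<lambda>_. coin) J (Pi\<^sub>E J ?F)"
    unfolding cylinder by (auto simp: flip_def space_PiM)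
  then have "emeasure (distr Cube.S Cube.S (flip k)) (prod_emb UNIV (\<lambda>_. coin) J (Pi\<^sub>E J F))
      = emeasure Cube.S (prod_emb UNIV (\<lambda>_. coin) J (Pi\<^sub>E J ?F))"
    using measurable_flip[unfolded cube_eq_sequence_space] J by (subst emeasure_distr) auto
  also have "\<dots> = (\<Prod>j\<in>J. emeasure coin (?F j))"
    using J by (intro Cube.emeasure_PiM_emb) auto
  also have "\<dots> = (\<Prod>j\<in>J. emeasure coin (F j))"
    by (rule prod.cong) (auto simp: emeasure_coin_vimage_Not)
  finally show "emeasure (distr Cube.S Cube.S (flip k)) (prod_emb UNIV (\<lambda>_. coin) J (Pi\<^sub>E J F))
      = (\<Prod>j\<in>J. emeasure coin (F j))" .
qed simp

lemma integral_cube_flip: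
  fixes F :: "(nat \<Rightarrow> bool) \<Rightarrow> real"
  assumes "F \<in> borel_measurable cube"
  shows "(\<integral>\<omega>. F (flip k \<omega>) \<partial>cube) = (\<integral>\<omega>. F \<omega> \<partial>cube)"
  using assms by (subst (2) distr_flip_cube[symmetric]) (simp add: integral_distr)

section \<open>Bounded random variables\<close>

definition bounded_rv :: "((nat \<Rightarrow> bool) \<Rightarrow> real) \<Rightarrow> bool" where
  "bounded_rv F \<longleftrightarrow> F \<in> borel_measurable cube \<and> (\<exists>B. \<forall>\<omega>. \<bar>F \<omega>\<bar> \<le> B)"

abbreviation mean :: "((nat \<Rightarrow> bool) \<Rightarrow> real) \<Rightarrow> real" where
  "mean F \<equiv> integral\<^sup>L cube F"

lemma bounded_rv_integrable: "bounded_rv F \<Longrightarrow> integrable cube F"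
  unfolding bounded_rv_def by (metis AE_I2 cube.integrable_const_bound real_norm_def)

lemma bounded_rv_measurable: "bounded_rv F \<Longrightarrow> F \<in> borel_measurable cube"
  unfolding bounded_rv_def by auto

lemma bounded_rv_const [simp]: "bounded_rv (\<lambda>_. c)"
  unfolding bounded_rv_def by auto

lemma bounded_rv_add: "bounded_rv F \<Longrightarrow> bounded_rv G \<Longrightarrow> bounded_rv (\<lambda>\<omega>. F \<omega> + G \<omega>)"
  unfolding bounded_rv_def by (auto intro!: exI abs_triangle_ineq[THEN order_trans] add_mono)

lemma bounded_rv_mult: "bounded_rv F \<Longrightarrow> bounded_rv G \<Longrightarrow> bounded_rv (\<lambda>\<omega>. F \<omega> * G \<omega>)"
  unfolding bounded_rv_def abs_mult
  by (auto intro!: exI mult_mono intro: order_trans[OF abs_ge_zero])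

lemma bounded_rv_diff: "bounded_rv F \<Longrightarrow> bounded_rv G \<Longrightarrow> bounded_rv (\<lambda>\<omega>. F \<omega> - G \<omega>)"
  using bounded_rv_add[of F "\<lambda>\<omega>. - G \<omega>"] unfolding bounded_rv_def by auto

lemma bounded_rv_cmult: "bounded_rv F \<Longrightarrow> bounded_rv (\<lambda>\<omega>. c * F \<omega>)"
  using bounded_rv_mult[OF bounded_rv_const] by simp

lemma bounded_rv_sum:
  "finite A \<Longrightarrow> (\<And>a. a \<in> A \<Longrightarrow> bounded_rv (F a)) \<Longrightarrow> bounded_rv (\<lambda>\<omega>. \<Sum>a\<in>A. F a \<omega>)"
  by (induction A rule: finite_induct) (auto intro: bounded_rv_add)

lemma bounded_rv_power: "bounded_rv F \<Longrightarrow> bounded_rv (\<lambda>\<omega>. F \<omega> ^ n)"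
  by (induction n) (auto intro: bounded_rv_mult)

lemma bounded_rv_abs: "bounded_rv F \<Longrightarrow> bounded_rv (\<lambda>\<omega>. \<bar>F \<omega>\<bar>)"
  unfolding bounded_rv_def by auto

lemma bounded_rv_flip: "bounded_rv F \<Longrightarrow> bounded_rv (\<lambda>\<omega>. F (flip k \<omega>))"
  unfolding bounded_rv_def by auto

lemma bounded_rv_indicator: "A \<in> sets cube \<Longrightarrow> bounded_rv (indicator A)"
  unfolding bounded_rv_def by (auto intro!: exI[of _ 1] simp: indicator_def)

lemma mean_add: "bounded_rv F \<Longrightarrow> bounded_rv G \<Longrightarrow> mean (\<lambda>\<omega>. F \<omega> + G \<omega>) = mean F + mean G"
  by (intro Bochner_Integration.integral_add bounded_rv_integrable)

lemma mean_diff: "bounded_rv F \<Longrightarrow> bounded_rv G \<Longrightarrow> mean (\<lambda>\<omega>. F \<omega> - G \<omega>) = mean F - mean G"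
  by (intro Bochner_Integration.integral_diff bounded_rv_integrable)

lemma mean_sum:
  "finite A \<Longrightarrow> (\<And>a. a \<in> A \<Longrightarrow> bounded_rv (F a)) \<Longrightarrow> mean (\<lambda>\<omega>. \<Sum>a\<in>A. F a \<omega>) = (\<Sum>a\<in>A. mean (F a))"
  by (intro Bochner_Integration.integral_sum bounded_rv_integrable)

lemma measure_cube_UNIV [simp]: "measure cube UNIV = 1"
  using cube.prob_space by simp

lemma mean_mono: "bounded_rv F \<Longrightarrow> bounded_rv G \<Longrightarrow> (\<And>\<omega>. F \<omega> \<le> G \<omega>) \<Longrightarrow> mean F \<le> mean G"
  by (intro integral_mono bounded_rv_integrable) auto

lemma mean_nonneg: "(\<And>\<omega>. 0 \<le> F \<omega>) \<Longrightarrow> 0 \<le> mean F"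
  by (intro integral_nonneg_AE AE_I2) auto

lemma mean_flip: "bounded_rv F \<Longrightarrow> mean (\<lambda>\<omega>. F (flip k \<omega>)) = mean F"
  by (intro integral_cube_flip bounded_rv_measurable)

lemma discriminant_le_of_quadratic_nonneg:
  fixes a b c :: real
  assumes nonneg: "\<And>t. 0 \<le> c - 2 * t * b + t^2 * a" and "a \<ge> 0"
  shows "b^2 \<le> c * a"
proof (cases "a = 0")
  case True
  show ?thesis
  proof (rule ccontr)
    assume "\<not> ?thesis"
    then have "b \<noteq> 0" using True by simp
    have "0 \<le> c - 2 * ((c + 1) / (2 * b)) * b" using nonneg[of "(c + 1) / (2 * b)"] True by simp
    also have "\<dots> = -1" using \<open>b \<noteq> 0\<close> by (simp add: field_simps)
    finally show False by simp
  qed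
next
  case False
  with \<open>a \<ge> 0\<close> have "a > 0" by simp
  have "0 \<le> c - 2 * (b / a) * b + (b / a)^2 * a" by (rule nonneg)
  also have "\<dots> = c - b^2 / a" using \<open>a > 0\<close> by (simp add: field_simps power2_eq_square)
  finally show ?thesis using \<open>a > 0\<close> by (simp add: field_simps)
qed

lemma integral_Cauchy_Schwarz:
  fixes f g :: "'a \<Rightarrow> real"
  assumes ff: "integrable M (\<lambda>x. f x ^ 2)" and gg: "integrable M (\<lambda>x. g x ^ 2)"
    and fg: "integrable M (\<lambda>x. f x * g x)"
  shows "(\<integral>x. f x * g x \<partial>M)^2 \<le> (\<integral>x. f x ^ 2 \<partial>M) * (\<integral>x. g x ^ 2 \<partial>M)"
proof (rule discriminant_le_of_quadratic_nonneg)
  fix t :: real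
  have "0 \<le> (\<integral>x. (f x - t * g x)^2 \<partial>M)" by simp
  also have "(\<lambda>x. (f x - t * g x)^2) = (\<lambda>x. (f x ^ 2 - 2 * t * (f x * g x)) + t^2 * g x ^ 2)"
    by (simp add: power2_eq_square algebra_simps)
  also have "(\<integral>x. \<dots> x \<partial>M) = (\<integral>x. f x ^ 2 \<partial>M) - 2 * t * (\<integral>x. f x * g x \<partial>M) + t^2 * (\<integral>x. g x ^ 2 \<partial>M)"
    using ff gg fg by simp
  finally show "0 \<le> (\<integral>x. f x ^ 2 \<partial>M) - 2 * t * (\<integral>x. f x * g x \<partial>M) + t^2 * (\<integral>x. g x ^ 2 \<partial>M)" .
qed simp

lemma mean_Cauchy_Schwarz:
  "bounded_rv X \<Longrightarrow> bounded_rv Y \<Longrightarrow>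
    (mean (\<lambda>\<omega>. X \<omega> * Y \<omega>))^2 \<le> mean (\<lambda>\<omega>. X \<omega> ^ 2) * mean (\<lambda>\<omega>. Y \<omega> ^ 2)"
  by (intro integral_Cauchy_Schwarz bounded_rv_integrable bounded_rv_power bounded_rv_mult)

(* Hoelder with exponents 4/3 and 4, for X with values in {-1, 0, 1}. *)
lemma mean_mult_pow4_le:
  assumes X: "bounded_rv X" and u: "bounded_rv u" and X_cube: "\<And>\<omega>. X \<omega> ^ 3 = X \<omega>"
  shows "(mean (\<lambda>\<omega>. X \<omega> * u \<omega>))^4 \<le> (mean (\<lambda>\<omega>. X \<omega> ^ 2))^3 * mean (\<lambda>\<omega>. u \<omega> ^ 4)"
proof -
  define p where "p = mean (\<lambda>\<omega>. X \<omega> ^ 2)"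
  define m where "m = mean (\<lambda>\<omega>. X \<omega> ^ 2 * u \<omega> ^ 2)"
  have X_pow3: "X \<omega> ^ 2 * X \<omega> = X \<omega>" for \<omega>
    using X_cube[of \<omega>] by (simp add: power2_eq_square power3_eq_cube)
  have "X \<omega> ^ 4 = X \<omega> ^ 2" for \<omega>
    using X_pow3[of \<omega>] by (metis mult.assoc power2_eq_square power4_eq_xxxx)
  then have X4: "mean (\<lambda>\<omega>. X \<omega> ^ 4) = p"
    unfolding p_def by simp
  have "mean (\<lambda>\<omega>. X \<omega> * u \<omega>) = mean (\<lambda>\<omega>. X \<omega> ^ 2 * (X \<omega> * u \<omega>))"
    by (simp add: X_pow3 mult.assoc[symmetric])
  also have "(\<dots>)^2 \<le> p * m"
    using mean_Cauchy_Schwarz[of "\<lambda>\<omega>. X \<omega> ^ 2" "\<lambda>\<omega>. X \<omega> * u \<omega>"] X u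
    by (simp add: X4 m_def power_mult_distrib bounded_rv_power bounded_rv_mult)
  finally have first: "(mean (\<lambda>\<omega>. X \<omega> * u \<omega>))^2 \<le> p * m" .
  have second: "m^2 \<le> p * mean (\<lambda>\<omega>. u \<omega> ^ 4)"
    using mean_Cauchy_Schwarz[of "\<lambda>\<omega>. X \<omega> ^ 2" "\<lambda>\<omega>. u \<omega> ^ 2"] X u
    by (simp add: X4 m_def bounded_rv_power flip: power_mult)
  have "p \<ge> 0" unfolding p_def by (rule mean_nonneg) simp
  have "(mean (\<lambda>\<omega>. X \<omega> * u \<omega>))^4 = ((mean (\<lambda>\<omega>. X \<omega> * u \<omega>))^2)^2"
    by simp
  also have "\<dots> \<le> (p * m)^2"
    using first by (intro power_mono) auto
  also have "\<dots> = p^2 * m^2" by (simp add: power_mult_distrib)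
  also have "\<dots> \<le> p^2 * (p * mean (\<lambda>\<omega>. u \<omega> ^ 4))"
    using second by (intro mult_left_mono) auto
  finally show ?thesis by (simp add: p_def power2_eq_square power3_eq_cube mult.assoc)
qed

section \<open>Walsh expansion\<close>

definition spin :: "bool \<Rightarrow> real" where
  "spin b = (if b then -1 else 1)"

definition walsh :: "nat set \<Rightarrow> (nat \<Rightarrow> bool) \<Rightarrow> real" where
  "walsh S \<omega> = (\<Prod>i\<in>S. spin (\<omega> i))"

lemma spin_mult_self [simp]: "spin b * spin b = 1"
  by (simp add: spin_def)

lemma walsh_empty [simp]: "walsh {} = (\<lambda>_. 1)"
  by (auto simp: walsh_def)

lemma abs_walsh [simp]: "\<bar>walsh S \<omega>\<bar> = 1"
  unfolding walsh_def abs_prod by (intro prod.neutral) (simp add: spin_def)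

lemma bounded_rv_spin: "bounded_rv (\<lambda>\<omega>. spin (\<omega> k))"
  unfolding bounded_rv_def spin_def by (auto intro!: exI[of _ 1])

lemma bounded_rv_walsh [simp]: "bounded_rv (walsh S)"
proof -
  have "walsh S \<in> borel_measurable cube"
    unfolding walsh_def spin_def by measurable
  then show ?thesis unfolding bounded_rv_def by (auto intro!: exI[of _ 1])
qed

lemma walsh_flip:
  assumes "finite S"
  shows "walsh S (flip k \<omega>) = (if k \<in> S then - walsh S \<omega> else walsh S \<omega>)"
proof (cases "k \<in> S")
  case True
  have rest: "(\<Prod>i\<in>S - {k}. spin (flip k \<omega> i)) = (\<Prod>i\<in>S - {k}. spin (\<omega> i))"
    by (rule prod.cong) (auto simp: flip_def)
  show ?thesis
    using assms True unfolding walsh_def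
    by (simp add: prod.remove rest) (simp add: flip_def spin_def)
next
  case False
  then show ?thesis unfolding walsh_def by (auto intro!: prod.cong simp: flip_def)
qed

lemma mean_walsh: "finite S \<Longrightarrow> mean (walsh S) = (if S = {} then 1 else 0)"
proof (cases "S = {}")
  case False
  assume "finite S"
  then obtain k where "k \<in> S" using False by auto
  have "mean (walsh S) = mean (\<lambda>\<omega>. walsh S (flip k \<omega>))" by (simp add: mean_flip)
  also have "\<dots> = - mean (walsh S)" using \<open>finite S\<close> \<open>k \<in> S\<close> by (simp add: walsh_flip)
  finally show ?thesis using False by simp
qed simp

lemma walsh_mult:
  assumes "finite S" "finite T"
  shows "walsh S \<omega> * walsh T \<omega> = walsh ((S - T) \<union> (T - S)) \<omega>"
proof -
  have split: "walsh A \<omega> = walsh (A - B) \<omega> * walsh (A \<inter> B) \<omega>" if "finite A" for A B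
    unfolding walsh_def using that by (subst prod.union_disjoint[symmetric]) (auto intro!: prod.cong)
  have "walsh (S \<inter> T) \<omega> * walsh (S \<inter> T) \<omega> = 1"
    unfolding walsh_def by (simp flip: prod.distrib)
  moreover have "walsh ((S - T) \<union> (T - S)) \<omega> = walsh (S - T) \<omega> * walsh (T - S) \<omega>"
    unfolding walsh_def using assms by (subst prod.union_disjoint) auto
  ultimately show ?thesis
    using split[OF \<open>finite S\<close>, of T] split[OF \<open>finite T\<close>, of S]
    by (simp add: Int_commute algebra_simps)
qed

lemma mean_walsh_mult:
  "finite S \<Longrightarrow> finite T \<Longrightarrow> mean (\<lambda>\<omega>. walsh S \<omega> * walsh T \<omega>) = (if S = T then 1 else 0)"
  by (simp add: walsh_mult mean_walsh) blast

lemma mean_spin_mult_flip_invariant: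
  assumes G: "bounded_rv G" and invariant: "\<And>\<omega>. G (flip k \<omega>) = G \<omega>"
  shows "mean (\<lambda>\<omega>. spin (\<omega> k) * G \<omega>) = 0"
proof -
  have "mean (\<lambda>\<omega>. spin (\<omega> k) * G \<omega>) = mean (\<lambda>\<omega>. spin (flip k \<omega> k) * G (flip k \<omega>))"
    by (rule mean_flip[symmetric, where F="\<lambda>\<omega>. spin (\<omega> k) * G \<omega>"])
      (intro bounded_rv_mult bounded_rv_spin G)
  also have "\<dots> = - mean (\<lambda>\<omega>. spin (\<omega> k) * G \<omega>)"
  proof -
    have "spin (flip k \<omega> k) * G (flip k \<omega>) = - (spin (\<omega> k) * G \<omega>)" for \<omega>
      by (simp only: invariant) (simp add: flip_def spin_def)
    then show ?thesis by simp
  qed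
  finally show ?thesis by simp
qed

lemma sum_Pow_insert:
  assumes "finite A" "x \<notin> A"
  shows "(\<Sum>S\<in>Pow (insert x A). h S) = (\<Sum>S\<in>Pow A. h S) + (\<Sum>S\<in>Pow A. h (insert x S))"
proof -
  have "inj_on (insert x) (Pow A)"
    using assms(2) by (intro inj_onI) (metis PowD insert_ident subsetD)
  moreover have "Pow A \<inter> insert x ` Pow A = {}" using assms(2) by auto
  ultimately show ?thesis
    using assms(1) by (simp add: Pow_insert sum.union_disjoint sum.reindex)
qed

lemma sum_Pow_lessThan_Suc:
  "(\<Sum>S\<in>Pow {..<Suc n}. h S) = (\<Sum>S\<in>Pow {..<n}. h S) + (\<Sum>S\<in>Pow {..<n}. h (insert n S))"
  unfolding lessThan_Suc by (rule sum_Pow_insert) auto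

definition walsh_poly :: "nat \<Rightarrow> (nat set \<Rightarrow> real) \<Rightarrow> (nat \<Rightarrow> bool) \<Rightarrow> real" where
  "walsh_poly n c \<omega> = (\<Sum>S\<in>Pow {..<n}. c S * walsh S \<omega>)"

lemma finite_of_in_Pow_lessThan: "S \<in> Pow {..<n::nat} \<Longrightarrow> finite S"
  by (auto intro: finite_subset)

lemma bounded_rv_walsh_poly [simp]: "bounded_rv (walsh_poly n c)"
  unfolding walsh_poly_def by (intro bounded_rv_sum bounded_rv_cmult) auto

lemma mean_walsh_poly_mult:
  "mean (\<lambda>\<omega>. walsh_poly n c \<omega> * walsh_poly n e \<omega>) = (\<Sum>S\<in>Pow {..<n}. c S * e S)"
proof -
  have "mean (\<lambda>\<omega>. walsh_poly n c \<omega> * walsh_poly n e \<omega>)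
      = mean (\<lambda>\<omega>. \<Sum>S\<in>Pow {..<n}. \<Sum>T\<in>Pow {..<n}. (c S * e T) * (walsh S \<omega> * walsh T \<omega>))"
    unfolding walsh_poly_def sum_product by (simp add: algebra_simps)
  also have "\<dots> = (\<Sum>S\<in>Pow {..<n}. \<Sum>T\<in>Pow {..<n}. (c S * e T) * mean (\<lambda>\<omega>. walsh S \<omega> * walsh T \<omega>))"
    by (simp add: mean_sum bounded_rv_sum bounded_rv_cmult bounded_rv_mult)
  also have "\<dots> = (\<Sum>S\<in>Pow {..<n}. \<Sum>T\<in>Pow {..<n}. if T = S then c S * e S else 0)"
    by (intro sum.cong refl) (auto simp: mean_walsh_mult finite_of_in_Pow_lessThan)
  finally show ?thesis by (simp add: sum.delta')
qed

lemma mean_walsh_poly: "mean (walsh_poly n c) = c {}"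
proof -
  have "mean (walsh_poly n c) = (\<Sum>S\<in>Pow {..<n}. c S * mean (walsh S))"
    unfolding walsh_poly_def by (simp add: mean_sum bounded_rv_cmult)
  also have "\<dots> = (\<Sum>S\<in>Pow {..<n}. if S = {} then c {} else 0)"
    by (intro sum.cong refl) (auto simp: mean_walsh finite_of_in_Pow_lessThan)
  finally show ?thesis by (simp add: sum.delta')
qed

lemma variance_walsh_poly:
  "mean (\<lambda>\<omega>. walsh_poly n c \<omega> ^ 2) - (mean (walsh_poly n c))^2 = (\<Sum>S\<in>Pow {..<n} - {{}}. (c S)^2)"
  using mean_walsh_poly_mult[of n c c]
  by (simp add: mean_walsh_poly power2_eq_square sum.remove[of "Pow {..<n}" "{}"])

lemma walsh_poly_Suc:
  "walsh_poly (Suc n) c \<omega> = walsh_poly n c \<omega> + spin (\<omega> n) * walsh_poly n (\<lambda>S. c (insert n S)) \<omega>"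
proof -
  have "walsh (insert n S) \<omega> = spin (\<omega> n) * walsh S \<omega>" if "S \<in> Pow {..<n}" for S
  proof -
    have "n \<notin> S" using that by auto
    then show ?thesis using finite_of_in_Pow_lessThan[OF that] by (simp add: walsh_def)
  qed
  then show ?thesis
    unfolding walsh_poly_def sum_Pow_lessThan_Suc sum_distrib_left
    by (auto intro!: sum.cong simp: algebra_simps)
qed

lemma walsh_poly_flip_ge: "n \<le> k \<Longrightarrow> walsh_poly n c (flip k \<omega>) = walsh_poly n c \<omega>"
  unfolding walsh_poly_def by (intro sum.cong refl) (auto simp: walsh_flip finite_of_in_Pow_lessThan)

definition coord_diff :: "nat \<Rightarrow> ((nat \<Rightarrow> bool) \<Rightarrow> real) \<Rightarrow> (nat \<Rightarrow> bool) \<Rightarrow> real" where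
  "coord_diff k F \<omega> = (F \<omega> - F (flip k \<omega>)) / 2"

lemma bounded_rv_coord_diff: "bounded_rv F \<Longrightarrow> bounded_rv (coord_diff k F)"
  unfolding coord_diff_def divide_inverse
  by (subst mult.commute) (intro bounded_rv_cmult bounded_rv_diff bounded_rv_flip)

lemma coord_diff_walsh_poly: "coord_diff k (walsh_poly n c) = walsh_poly n (\<lambda>S. if k \<in> S then c S else 0)"
proof
  fix \<omega>
  have "coord_diff k (walsh_poly n c) \<omega>
      = (\<Sum>S\<in>Pow {..<n}. c S * ((walsh S \<omega> - walsh S (flip k \<omega>)) / 2))"
    unfolding coord_diff_def walsh_poly_def
    by (simp add: sum_subtractf[symmetric] sum_divide_distrib[symmetric] right_diff_distrib)
  also have "\<dots> = walsh_poly n (\<lambda>S. if k \<in> S then c S else 0) \<omega>"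
    unfolding walsh_poly_def
    by (intro sum.cong refl) (auto simp: walsh_flip finite_of_in_Pow_lessThan)
  finally show "coord_diff k (walsh_poly n c) \<omega> = walsh_poly n (\<lambda>S. if k \<in> S then c S else 0) \<omega>" .
qed

section \<open>Bonami's hypercontractivity\<close>

lemma mean_fourth_power_spin_extension:
  assumes A: "bounded_rv A" and B: "bounded_rv B"
    and invariant: "\<And>\<omega>. A (flip n \<omega>) = A \<omega>" "\<And>\<omega>. B (flip n \<omega>) = B \<omega>"
  shows "mean (\<lambda>\<omega>. (A \<omega> + spin (\<omega> n) * (r * B \<omega>))^4)
    = mean (\<lambda>\<omega>. A \<omega> ^ 4) + 6 * r^2 * mean (\<lambda>\<omega>. A \<omega> ^ 2 * B \<omega> ^ 2) + r^4 * mean (\<lambda>\<omega>. B \<omega> ^ 4)"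
proof -
  let ?odd = "\<lambda>\<omega>. 4 * r * (A \<omega> ^ 3 * B \<omega>) + 4 * r^3 * (A \<omega> * B \<omega> ^ 3)"
  have spin_powers: "spin b ^ 2 = 1" "spin b ^ 3 = spin b" "spin b ^ 4 = 1" for b
    by (simp_all add: spin_def)
  have "(A \<omega> + spin (\<omega> n) * (r * B \<omega>))^4 =
      A \<omega> ^ 4 + 6 * r^2 * (spin (\<omega> n))^2 * (A \<omega> ^ 2 * B \<omega> ^ 2) + r^4 * (spin (\<omega> n))^4 * B \<omega> ^ 4
      + (4 * r * spin (\<omega> n) * (A \<omega> ^ 3 * B \<omega>) + 4 * r^3 * (spin (\<omega> n))^3 * (A \<omega> * B \<omega> ^ 3))" for \<omega>
    by (simp add: algebra_simps power2_eq_square power3_eq_cube power4_eq_xxxx)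
  then have expand: "(A \<omega> + spin (\<omega> n) * (r * B \<omega>))^4 =
      A \<omega> ^ 4 + 6 * r^2 * (A \<omega> ^ 2 * B \<omega> ^ 2) + r^4 * B \<omega> ^ 4 + spin (\<omega> n) * ?odd \<omega>" for \<omega>
    by (simp add: spin_powers algebra_simps)
  have odd: "bounded_rv ?odd" using A B
    by (intro bounded_rv_add bounded_rv_cmult bounded_rv_mult bounded_rv_power)
  have "mean (\<lambda>\<omega>. spin (\<omega> n) * ?odd \<omega>) = 0"
    using odd by (rule mean_spin_mult_flip_invariant) (simp add: invariant)
  then show ?thesis
    unfolding expand using A B odd bounded_rv_spin
    by (simp add: mean_add bounded_rv_add bounded_rv_cmult bounded_rv_mult bounded_rv_power)
qed

lemma walsh_poly_hypercontractive:
  fixes r :: real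
  assumes r: "3 * r^2 \<le> 1"
  shows "mean (\<lambda>\<omega>. walsh_poly n (\<lambda>S. r ^ card S * c S) \<omega> ^ 4) \<le> (\<Sum>S\<in>Pow {..<n}. (c S)^2)^2"
proof (induction n arbitrary: c)
  case 0
  then show ?case by (simp add: walsh_poly_def)
next
  case (Suc n)
  define A where "A = walsh_poly n (\<lambda>S. r ^ card S * c S)"
  define B where "B = walsh_poly n (\<lambda>S. r ^ card S * c (insert n S))"
  define \<alpha> where "\<alpha> = (\<Sum>S\<in>Pow {..<n}. (c S)^2)"
  define \<beta> where "\<beta> = (\<Sum>S\<in>Pow {..<n}. (c (insert n S))^2)"
  have IA: "mean (\<lambda>\<omega>. A \<omega> ^ 4) \<le> \<alpha>^2" unfolding A_def \<alpha>_def by (rule Suc.IH)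
  have IB: "mean (\<lambda>\<omega>. B \<omega> ^ 4) \<le> \<beta>^2" unfolding B_def \<beta>_def by (rule Suc.IH)
  have "\<alpha> \<ge> 0" "\<beta> \<ge> 0" unfolding \<alpha>_def \<beta>_def by (auto intro: sum_nonneg)
  have split: "walsh_poly (Suc n) (\<lambda>S. r ^ card S * c S) \<omega> = A \<omega> + spin (\<omega> n) * (r * B \<omega>)" for \<omega>
  proof -
    have "card (insert n S) = Suc (card S)" if "S \<in> Pow {..<n}" for S
      using that finite_of_in_Pow_lessThan[OF that] by (subst card_insert_disjoint) auto
    then have "walsh_poly n (\<lambda>S. r ^ card (insert n S) * c (insert n S)) \<omega> = r * B \<omega>"
      unfolding B_def walsh_poly_def sum_distrib_left by (intro sum.cong refl) auto
    then show ?thesis unfolding walsh_poly_Suc A_def by simp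
  qed
  have mixed: "mean (\<lambda>\<omega>. A \<omega> ^ 2 * B \<omega> ^ 2) \<le> \<alpha> * \<beta>"
  proof -
    have "(mean (\<lambda>\<omega>. A \<omega> ^ 2 * B \<omega> ^ 2))^2 \<le> mean (\<lambda>\<omega>. A \<omega> ^ 4) * mean (\<lambda>\<omega>. B \<omega> ^ 4)"
      using mean_Cauchy_Schwarz[of "\<lambda>\<omega>. A \<omega> ^ 2" "\<lambda>\<omega>. B \<omega> ^ 2"]
      by (simp add: A_def B_def bounded_rv_power)
    also have "\<dots> \<le> \<alpha>^2 * \<beta>^2"
      using IA IB by (intro mult_mono) (auto intro: mean_nonneg)
    also have "\<dots> = (\<alpha> * \<beta>)^2" by (simp add: power_mult_distrib)
    finally show ?thesis
      by (rule power2_le_imp_le) (use \<open>\<alpha> \<ge> 0\<close> \<open>\<beta> \<ge> 0\<close> in simp)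
  qed
  have "r^2 \<le> 1" using r by simp
  then have "r^4 \<le> 1" using power_mono[of "r^2" 1 2] by simp
  have "mean (\<lambda>\<omega>. walsh_poly (Suc n) (\<lambda>S. r ^ card S * c S) \<omega> ^ 4)
      = mean (\<lambda>\<omega>. A \<omega> ^ 4) + 6 * r^2 * mean (\<lambda>\<omega>. A \<omega> ^ 2 * B \<omega> ^ 2) + r^4 * mean (\<lambda>\<omega>. B \<omega> ^ 4)"
    unfolding split by (rule mean_fourth_power_spin_extension) (auto simp: A_def B_def walsh_poly_flip_ge)
  also have "\<dots> \<le> \<alpha>^2 + 2 * (\<alpha> * \<beta>) + \<beta>^2"
  proof -
    have "6 * r^2 * mean (\<lambda>\<omega>. A \<omega> ^ 2 * B \<omega> ^ 2) \<le> 2 * (\<alpha> * \<beta>)"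
      using mixed r by (intro mult_mono) (auto intro: mean_nonneg)
    moreover have "r^4 * mean (\<lambda>\<omega>. B \<omega> ^ 4) \<le> \<beta>^2"
      using IB \<open>r^4 \<le> 1\<close> by (intro mult_left_le_one_le[THEN order_trans]) (auto intro: mean_nonneg)
    ultimately show ?thesis using IA by linarith
  qed
  also have "\<dots> = (\<Sum>S\<in>Pow {..<Suc n}. (c S)^2)^2"
    by (simp add: sum_Pow_lessThan_Suc \<alpha>_def \<beta>_def power2_eq_square algebra_simps)
  finally show ?case .
qed

lemma mean_fourth_power_noise_le:
  "mean (\<lambda>\<omega>. walsh_poly n (\<lambda>S. (1/3)^card S * c S) \<omega> ^ 4) \<le> (\<Sum>S\<in>Pow {..<n}. (1/3)^card S * (c S)^2)^2"
proof -
  define r :: real where "r = sqrt (1/3)"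
  have r_sq_pow: "(r ^ m)^2 = (1/3)^m" for m
  proof -
    have "(r ^ m)^2 = (r^2)^m" by (simp only: power_mult[symmetric] mult.commute)
    then show ?thesis by (simp add: r_def)
  qed
  have "mean (\<lambda>\<omega>. walsh_poly n (\<lambda>S. r ^ card S * (r ^ card S * c S)) \<omega> ^ 4)
      \<le> (\<Sum>S\<in>Pow {..<n}. (r ^ card S * c S)^2)^2"
    by (rule walsh_poly_hypercontractive) (simp add: r_def)
  then show ?thesis
    by (simp add: mult.assoc[symmetric] power_mult_distrib r_sq_pow flip: power2_eq_square)
qed

section \<open>Conditional expectation given the first coordinates\<close>

interpretation cube_pair: pair_prob_space cube cube
  by (simp add: pair_prob_space_def pair_sigma_finite_def cube.prob_space_axioms prob_space_imp_sigma_finite)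

(* Resampling all coordinates from n on gives the conditional expectation given the first n. *)
definition proj :: "nat \<Rightarrow> ((nat \<Rightarrow> bool) \<Rightarrow> real) \<Rightarrow> (nat \<Rightarrow> bool) \<Rightarrow> real" where
  "proj n F \<omega> = (\<integral>\<eta>. F (comb_seq n \<omega> \<eta>) \<partial>cube)"

definition depends_on_first :: "nat \<Rightarrow> ((nat \<Rightarrow> bool) \<Rightarrow> real) \<Rightarrow> bool" where
  "depends_on_first n U \<longleftrightarrow> (\<forall>\<omega> \<omega>'. (\<forall>i<n. \<omega> i = \<omega>' i) \<longrightarrow> U \<omega> = U \<omega>')"

lemma measurable_comb_seq_cube: "(\<lambda>(\<omega>, \<eta>). comb_seq n \<omega> \<eta>) \<in> measurable (cube \<Otimes>\<^sub>M cube) cube"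
  unfolding cube_def by (rule measurable_comb_seq)

lemma measurable_comb_seq_cube': "comb_seq n \<omega> \<in> measurable cube cube"
  unfolding cube_def
  by (rule measurable_comb_seq'[OF measurable_const measurable_ident_sets]) (auto simp: space_PiM)

lemma bounded_rv_comb_seq: "bounded_rv F \<Longrightarrow> bounded_rv (\<lambda>\<eta>. F (comb_seq n \<omega> \<eta>))"
  unfolding bounded_rv_def using measurable_comb_seq_cube' by (auto intro: measurable_compose)

lemma bounded_rv_proj: "bounded_rv F \<Longrightarrow> bounded_rv (proj n F)"
proof -
  assume F: "bounded_rv F"
  then obtain B where B: "\<And>\<omega>. \<bar>F \<omega>\<bar> \<le> B" unfolding bounded_rv_def by auto
  have "(\<lambda>(\<omega>, \<eta>). F (comb_seq n \<omega> \<eta>)) \<in> borel_measurable (cube \<Otimes>\<^sub>M cube)"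
    using measurable_compose[OF measurable_comb_seq_cube bounded_rv_measurable[OF F]]
    by (simp add: case_prod_beta)
  then have "proj n F \<in> borel_measurable cube"
    unfolding proj_def by (rule cube.borel_measurable_lebesgue_integral)
  moreover have "\<bar>proj n F \<omega>\<bar> \<le> B" for \<omega>
  proof -
    have "\<bar>proj n F \<omega>\<bar> \<le> mean (\<lambda>\<eta>. \<bar>F (comb_seq n \<omega> \<eta>)\<bar>)"
      unfolding proj_def using integral_norm_bound[of cube "\<lambda>\<eta>. F (comb_seq n \<omega> \<eta>)"] by simp
    also have "\<dots> \<le> B"
      using B bounded_rv_integrable[OF bounded_rv_abs[OF bounded_rv_comb_seq[OF F]]]
      by (intro cube.integral_le_const AE_I2) auto
    finally show ?thesis .
  qed
  ultimately show ?thesis unfolding bounded_rv_def by auto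
qed

lemma mean_proj: "bounded_rv F \<Longrightarrow> mean (proj n F) = mean F"
proof -
  assume F: "bounded_rv F"
  then obtain B where "\<And>\<omega>. \<bar>F \<omega>\<bar> \<le> B" unfolding bounded_rv_def by auto
  moreover have meas: "(\<lambda>p. F (case p of (\<omega>, \<eta>) \<Rightarrow> comb_seq n \<omega> \<eta>)) \<in> borel_measurable (cube \<Otimes>\<^sub>M cube)"
    using measurable_compose[OF measurable_comb_seq_cube bounded_rv_measurable[OF F]] by simp
  ultimately have int: "integrable (cube \<Otimes>\<^sub>M cube) (\<lambda>p. F (case p of (\<omega>, \<eta>) \<Rightarrow> comb_seq n \<omega> \<eta>))"
    by (intro cube_pair.integrable_const_bound[where B=B] AE_I2) auto
  have "mean F = integral\<^sup>L (distr (cube \<Otimes>\<^sub>M cube) cube (\<lambda>(\<omega>, \<eta>). comb_seq n \<omega> \<eta>)) F"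
    by (simp add: cube_eq_sequence_space Cube.PiM_comb_seq)
  also have "\<dots> = integral\<^sup>L (cube \<Otimes>\<^sub>M cube) (\<lambda>p. F (case p of (\<omega>, \<eta>) \<Rightarrow> comb_seq n \<omega> \<eta>))"
    by (rule integral_distr[OF measurable_comb_seq_cube]) (use bounded_rv_measurable[OF F] in simp)
  also have "\<dots> = mean (proj n F)"
    using cube_pair.integral_fst'[OF int] by (simp add: proj_def[abs_def])
  finally show ?thesis by simp
qed

lemma depends_on_first_proj: "depends_on_first n (proj n F)"
proof -
  have "comb_seq n \<omega> = comb_seq n \<omega>'" if "\<forall>i<n. \<omega> i = \<omega>' i" for \<omega> \<omega>' :: "nat \<Rightarrow> bool"
    using that by (intro ext) (simp add: comb_seq_def)
  then show ?thesis unfolding depends_on_first_def proj_def by metis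
qed

lemma mean_proj_mult:
  assumes F: "bounded_rv F" and U: "bounded_rv U" and "depends_on_first n U"
  shows "mean (\<lambda>\<omega>. proj n F \<omega> * U \<omega>) = mean (\<lambda>\<omega>. F \<omega> * U \<omega>)"
proof -
  have "U (comb_seq n \<omega> \<eta>) = U \<omega>" for \<omega> \<eta>
    using \<open>depends_on_first n U\<close> unfolding depends_on_first_def by (auto simp: comb_seq_less)
  then have "proj n F \<omega> * U \<omega> = proj n (\<lambda>\<omega>. F \<omega> * U \<omega>) \<omega>" for \<omega>
    unfolding proj_def by simp
  then show ?thesis using F U by (simp add: mean_proj bounded_rv_mult)
qed

lemma mean_proj_square_le:
  assumes F: "bounded_rv F"
  shows "mean (\<lambda>\<omega>. proj n F \<omega> ^ 2) \<le> mean (\<lambda>\<omega>. F \<omega> ^ 2)"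
proof -
  define x where "x = mean (\<lambda>\<omega>. proj n F \<omega> ^ 2)"
  have PF: "bounded_rv (proj n F)" using F by (rule bounded_rv_proj)
  have "x = mean (\<lambda>\<omega>. F \<omega> * proj n F \<omega>)"
    unfolding x_def power2_eq_square
    using mean_proj_mult[OF F PF depends_on_first_proj] by (simp add: mult.commute)
  then have "x^2 \<le> mean (\<lambda>\<omega>. F \<omega> ^ 2) * x"
    using mean_Cauchy_Schwarz[OF F PF] by (simp add: x_def)
  moreover have "x \<ge> 0" unfolding x_def by (rule mean_nonneg) simp
  ultimately show ?thesis unfolding x_def[symmetric]
    by (cases "x = 0") (auto simp: power2_eq_square intro: mean_nonneg)
qed

lemma proj_coord_diff:
  assumes "k < n" and F: "bounded_rv F"
  shows "proj n (coord_diff k F) = coord_diff k (proj n F)"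
proof
  fix \<omega>
  have "comb_seq n (flip k \<omega>) \<eta> = flip k (comb_seq n \<omega> \<eta>)" for \<eta>
    using \<open>k < n\<close> by (intro ext) (simp add: comb_seq_def flip_def)
  then show "proj n (coord_diff k F) \<omega> = coord_diff k (proj n F) \<omega>"
    unfolding proj_def coord_diff_def
    using bounded_rv_integrable[OF bounded_rv_comb_seq[OF F]]
      bounded_rv_integrable[OF bounded_rv_comb_seq[OF bounded_rv_flip[OF F]]]
    by simp
qed

lemma depends_on_first_walsh_poly: "depends_on_first n (walsh_poly n c)"
  unfolding depends_on_first_def walsh_poly_def walsh_def
  by (auto intro!: sum.cong prod.cong simp: subset_iff)

lemma walsh_poly_exists:
  "depends_on_first n W \<Longrightarrow> \<exists>c. W = walsh_poly n c"
proof (induction n arbitrary: W)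
  case 0
  then have "W = walsh_poly 0 (\<lambda>_. W undefined)"
    by (auto simp: depends_on_first_def walsh_poly_def)
  then show ?case by blast
next
  case (Suc n)
  define W0 where "W0 \<omega> = (W (fun_upd \<omega> n False) + W (fun_upd \<omega> n True)) / 2" for \<omega>
  define W1 where "W1 \<omega> = (W (fun_upd \<omega> n False) - W (fun_upd \<omega> n True)) / 2" for \<omega>
  have upd: "W (fun_upd \<omega> n v) = W (fun_upd \<omega>' n v)" if "\<forall>i<n. \<omega> i = \<omega>' i" for \<omega> \<omega>' v
  proof -
    have "\<forall>i<Suc n. fun_upd \<omega> n v i = fun_upd \<omega>' n v i" using that by (simp add: less_Suc_eq)
    then show ?thesis using Suc.prems unfolding depends_on_first_def by blast
  qed
  then have "W0 \<omega> = W0 \<omega>' \<and> W1 \<omega> = W1 \<omega>'" if "\<forall>i<n. \<omega> i = \<omega>' i" for \<omega> \<omega>'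
    using upd[OF that] by (simp add: W0_def W1_def)
  then have "depends_on_first n W0" "depends_on_first n W1"
    unfolding depends_on_first_def by blast+
  then obtain a b where a: "W0 = walsh_poly n a" and b: "W1 = walsh_poly n b"
    using Suc.IH by metis
  define c where "c S = (if n \<in> S then b (S - {n}) else a S)" for S
  have "walsh_poly n (\<lambda>S. c S) = walsh_poly n a" "walsh_poly n (\<lambda>S. c (insert n S)) = walsh_poly n b"
  proof -
    have "S - {n} = S" if "S \<in> Pow {..<n}" for S using that by auto
    then show "walsh_poly n (\<lambda>S. c S) = walsh_poly n a" "walsh_poly n (\<lambda>S. c (insert n S)) = walsh_poly n b"
      unfolding walsh_poly_def c_def by (auto intro!: sum.cong ext)
  qed
  then have "walsh_poly (Suc n) c \<omega> = W0 \<omega> + spin (\<omega> n) * W1 \<omega>" for \<omega>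
    unfolding walsh_poly_Suc a b by simp
  moreover have "W \<omega> = W0 \<omega> + spin (\<omega> n) * W1 \<omega>" for \<omega>
    by (cases "\<omega> n") (simp_all add: W0_def W1_def spin_def fun_upd_idem field_simps)
  ultimately have "W = walsh_poly (Suc n) c" by auto
  then show ?case by blast
qed

section \<open>Approximation by finitely many coordinates\<close>

definition proj_error :: "nat \<Rightarrow> (nat \<Rightarrow> bool) set \<Rightarrow> real" where
  "proj_error n A = mean (\<lambda>\<omega>. \<bar>proj n (indicator A) \<omega> - indicator A \<omega>\<bar>)"

lemma proj_error_nonneg: "0 \<le> proj_error n A"
  unfolding proj_error_def by (rule mean_nonneg) simp

lemma proj_indicator_nonneg: "A \<in> sets cube \<Longrightarrow> 0 \<le> proj n (indicator A) \<omega>"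
  unfolding proj_def by (rule mean_nonneg) simp

lemma proj_error_cylinder:
  assumes "A \<in> prod_algebra UNIV (\<lambda>_. coin)"
  shows "(\<lambda>n. proj_error n A) \<longlonglongrightarrow> 0"
proof -
  obtain J E where A: "A = prod_emb UNIV (\<lambda>_. coin) J (Pi\<^sub>E J E)" and "finite J"
    using prod_algebraE[OF assms] by metis
  then obtain N where N: "\<And>i. i \<in> J \<Longrightarrow> i < N"
    by (metis finite_nat_set_iff_bounded)
  have "proj_error n A = 0" if "n \<ge> N" for n
  proof -
    have "i < n" if "i \<in> J" for i
      using N[OF that] \<open>n \<ge> N\<close> by simp
    then have "comb_seq n \<omega> \<eta> \<in> A \<longleftrightarrow> \<omega> \<in> A" for \<omega> \<eta>
      by (auto simp: A prod_emb_def PiE_iff comb_seq_def)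
    then have "proj n (indicator A) = indicator A"
      by (auto simp: proj_def indicator_def)
    then show ?thesis unfolding proj_error_def by simp
  qed
  then show ?thesis
    by (intro tendsto_eventually eventually_sequentiallyI[of N]) auto
qed

lemma proj_error_compl:
  assumes "A \<in> sets cube"
  shows "proj_error n (UNIV - A) = proj_error n A"
proof -
  have compl: "indicator (UNIV - A) = (\<lambda>\<omega>. 1 - indicator A \<omega> :: real)"
    by (auto simp: indicator_def)
  have "proj n (indicator (UNIV - A)) \<omega> = 1 - proj n (indicator A) \<omega>" for \<omega>
    unfolding compl proj_def
    using bounded_rv_comb_seq[OF bounded_rv_indicator[OF assms]]
    by (simp add: mean_diff)
  then show ?thesis unfolding proj_error_def by (simp add: compl abs_minus_commute)
qed

lemma proj_error_Union_le:
  fixes A :: "nat \<Rightarrow> (nat \<Rightarrow> bool) set"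
  assumes disj: "disjoint_family A" and sets: "\<And>i. A i \<in> sets cube"
  shows "proj_error n (\<Union>i. A i) \<le> (\<Sum>i<N. proj_error n (A i)) + 2 * measure cube (\<Union>i\<in>{N..}. A i)"
proof -
  define T where "T = (\<Union>i\<in>{N..}. A i)"
  have T: "T \<in> sets cube" unfolding T_def using sets by (intro sets.countable_UN'') simp_all
  have bA: "bounded_rv (indicator (A i))" for i using sets by (rule bounded_rv_indicator)
  have bT: "bounded_rv (indicator T)" using T by (rule bounded_rv_indicator)
  have split: "indicator (\<Union>i. A i) = (\<lambda>\<omega>. (\<Sum>i<N. indicator (A i) \<omega>) + indicator T \<omega> :: real)"
  proof -
    have "{..<N} \<union> {N..} = UNIV" by auto
    then have "(\<Union>i. A i) = (\<Union>i<N. A i) \<union> T"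
      unfolding T_def by (metis UN_Un)
    moreover have "A i \<inter> A j = {}" if "i < N" "N \<le> j" for i j
      using disjoint_family_onD[OF disj, of i j] that by auto
    then have "(\<Union>i<N. A i) \<inter> T = {}" unfolding T_def by blast
    moreover have "disjoint_family_on A {..<N}"
      using disj by (rule disjoint_family_on_mono[rotated]) simp
    ultimately show ?thesis
      by (intro ext) (simp add: indicator_disj_union indicator_UN_disjoint)
  qed
  have proj_split: "proj n (indicator (\<Union>i. A i)) \<omega>
      = (\<Sum>i<N. proj n (indicator (A i)) \<omega>) + proj n (indicator T) \<omega>" for \<omega>
    unfolding split proj_def
    using bA bT by (simp add: mean_add mean_sum bounded_rv_sum bounded_rv_comb_seq)
  have "\<bar>proj n (indicator (\<Union>i. A i)) \<omega> - indicator (\<Union>i. A i) \<omega>\<bar>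
      \<le> (\<Sum>i<N. \<bar>proj n (indicator (A i)) \<omega> - indicator (A i) \<omega>\<bar>) + (proj n (indicator T) \<omega> + indicator T \<omega>)" for \<omega>
    using sum_abs[of "\<lambda>i. proj n (indicator (A i)) \<omega> - indicator (A i) \<omega>" "{..<N}"]
      proj_indicator_nonneg[OF T, of n \<omega>] indicator_pos_le[of T \<omega>, where 'a=real]
    unfolding proj_split fun_cong[OF split] sum_subtractf by (smt (verit))
  then have "proj_error n (\<Union>i. A i)
      \<le> mean (\<lambda>\<omega>. (\<Sum>i<N. \<bar>proj n (indicator (A i)) \<omega> - indicator (A i) \<omega>\<bar>) + (proj n (indicator T) \<omega> + indicator T \<omega>))"
    unfolding proj_error_def using bA bT
    by (intro mean_mono bounded_rv_add bounded_rv_sum bounded_rv_abs bounded_rv_diff bounded_rv_proj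
        bounded_rv_indicator) (auto intro: sets T)
  also have "\<dots> = (\<Sum>i<N. proj_error n (A i)) + 2 * measure cube T"
    unfolding proj_error_def using bA bT T
    by (simp add: mean_add mean_sum mean_proj bounded_rv_sum bounded_rv_add bounded_rv_abs bounded_rv_diff
        bounded_rv_proj)
  finally show ?thesis unfolding T_def .
qed

lemma measure_tail_Union_tendsto_0:
  fixes A :: "nat \<Rightarrow> (nat \<Rightarrow> bool) set"
  assumes disj: "disjoint_family A" and sets: "\<And>i. A i \<in> sets cube"
  shows "(\<lambda>N. measure cube (\<Union>i\<in>{N..}. A i)) \<longlonglongrightarrow> 0"
proof -
  have "(\<lambda>N. measure cube (\<Union>i\<in>{N..}. A i)) \<longlonglongrightarrow> measure cube (\<Inter>N. \<Union>i\<in>{N..}. A i)"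
  proof (rule cube.finite_Lim_measure_decseq)
    show "range (\<lambda>N. \<Union>i\<in>{N..}. A i) \<subseteq> sets cube"
      using sets by (auto intro!: sets.countable_UN'')
    show "decseq (\<lambda>N. \<Union>i\<in>{N..}. A i)"
      unfolding decseq_def by (intro allI impI UN_mono) auto
  qed
  moreover have "(\<Inter>N. \<Union>i\<in>{N..}. A i) = {}"
  proof (rule equals0I)
    fix \<omega> assume \<omega>: "\<omega> \<in> (\<Inter>N. \<Union>i\<in>{N..}. A i)"
    then obtain j where "\<omega> \<in> A j" by auto
    moreover from \<omega> obtain i where "i \<ge> Suc j" "\<omega> \<in> A i" by blast
    ultimately show False using disjoint_family_onD[OF disj, of i j] by auto
  qed
  ultimately show ?thesis by simp
qed

lemma tendsto_0_of_uniform_approximation: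
  fixes x :: "nat \<Rightarrow> real"
  assumes bound: "\<And>N n. \<bar>x n\<bar> \<le> y N n + z N"
    and y: "\<And>N. y N \<longlonglongrightarrow> 0" and z: "z \<longlonglongrightarrow> 0"
  shows "x \<longlonglongrightarrow> 0"
proof (rule LIMSEQ_I)
  fix r :: real assume "0 < r"
  then obtain N where N: "\<bar>z N\<bar> < r / 2"
    using LIMSEQ_D[OF z, of "r / 2"] by auto
  obtain n0 where "\<forall>n\<ge>n0. \<bar>y N n\<bar> < r / 2"
    using LIMSEQ_D[OF y, of "r / 2"] \<open>0 < r\<close> by auto
  then have "\<bar>x n\<bar> < r" if "n \<ge> n0" for n
    using bound[where N=N and n=n] N abs_ge_self[of "y N n"] that by fastforce
  then show "\<exists>n0. \<forall>n\<ge>n0. norm (x n - 0) < r" by auto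
qed

lemma proj_error_tendsto_0:
  assumes "A \<in> sets cube"
  shows "(\<lambda>n. proj_error n A) \<longlonglongrightarrow> 0"
proof -
  have sets_cube: "sets cube = sigma_sets UNIV (prod_algebra UNIV (\<lambda>_. coin))"
    unfolding cube_def sets_PiM by (simp add: PiE_UNIV_domain)
  have generators: "prod_algebra UNIV (\<lambda>_. coin) \<subseteq> Pow UNIV" by simp
  have "A \<in> sigma_sets UNIV (prod_algebra UNIV (\<lambda>_. coin))"
    using assms sets_cube by simp
  with Int_stable_prod_algebra generators show ?thesis
  proof (induction rule: sigma_sets_induct_disjoint)
    case (basic A)
    then show ?case by (rule proj_error_cylinder)
  next
    case empty
    then show ?case by (simp add: proj_error_def proj_def)
  next
    case (compl A)
    then show ?case by (simp add: proj_error_compl sets_cube)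
  next
    case (union A)
    then have disj: "disjoint_family A" and sets: "\<And>i. A i \<in> sets cube"
      by (auto simp: sets_cube)
    show ?case
    proof (rule tendsto_0_of_uniform_approximation)
      show "\<bar>proj_error n (\<Union>i. A i)\<bar> \<le> (\<Sum>i<N. proj_error n (A i)) + 2 * measure cube (\<Union>i\<in>{N..}. A i)"
        for N n using proj_error_Union_le[OF disj sets] by (simp add: proj_error_nonneg)
      show "(\<lambda>n. \<Sum>i<N. proj_error n (A i)) \<longlonglongrightarrow> 0" for N
        using tendsto_sum[of "{..<N}" "\<lambda>i n. proj_error n (A i)" "\<lambda>_. 0"] union by simp
      show "(\<lambda>N. 2 * measure cube (\<Union>i\<in>{N..}. A i)) \<longlonglongrightarrow> 0"
        using tendsto_mult_right_zero[OF measure_tail_Union_tendsto_0[OF disj sets]] .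
    qed
  qed
qed

section \<open>Influences of Boolean functions\<close>

lemma boolean_fun_values: "boolean_fun f \<Longrightarrow> f \<omega> = 1 \<or> f \<omega> = -1"
  unfolding boolean_fun_def by auto

lemma bounded_rv_boolean_fun: "boolean_fun f \<Longrightarrow> bounded_rv f"
proof -
  assume f: "boolean_fun f"
  then have "\<bar>f \<omega>\<bar> \<le> 1" for \<omega> using boolean_fun_values[OF f, of \<omega>] by auto
  then show ?thesis using f unfolding boolean_fun_def bounded_rv_def by auto
qed

lemma boolean_fun_square: "boolean_fun f \<Longrightarrow> f \<omega> ^ 2 = 1"
  using boolean_fun_values[of f \<omega>] by auto

definition pivotal :: "nat \<Rightarrow> ((nat \<Rightarrow> bool) \<Rightarrow> real) \<Rightarrow> (nat \<Rightarrow> bool) set" where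
  "pivotal k f = {\<omega>. f (flip k \<omega>) \<noteq> f \<omega>}"

lemma sets_pivotal: "boolean_fun f \<Longrightarrow> pivotal k f \<in> sets cube"
proof -
  assume "boolean_fun f"
  then have f: "f \<in> borel_measurable cube" unfolding boolean_fun_def by simp
  have "{\<omega> \<in> space cube. f (flip k \<omega>) \<noteq> f \<omega>} \<in> sets cube"
    using measurable_compose[OF measurable_flip f] f by (rule borel_measurable_neq)
  then show ?thesis unfolding pivotal_def by simp
qed

lemma influence_eq_measure_pivotal: "influence k f = measure cube (pivotal k f)"
  unfolding influence_def pivotal_def by simp

lemma influence_nonneg: "0 \<le> influence k f"
  unfolding influence_def by simp

lemma coord_diff_square_boolean:
  "boolean_fun f \<Longrightarrow> (coord_diff k f \<omega>)^2 = indicator (pivotal k f) \<omega>"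
  using boolean_fun_values[of f \<omega>] boolean_fun_values[of f "flip k \<omega>"]
  unfolding coord_diff_def pivotal_def by (auto simp: indicator_def)

lemma coord_diff_cube_boolean: "boolean_fun f \<Longrightarrow> (coord_diff k f \<omega>)^3 = coord_diff k f \<omega>"
  using boolean_fun_values[of f \<omega>] boolean_fun_values[of f "flip k \<omega>"]
  unfolding coord_diff_def by (auto simp: power3_eq_cube)

lemma mean_coord_diff_square: "boolean_fun f \<Longrightarrow> mean (\<lambda>\<omega>. (coord_diff k f \<omega>)^2) = influence k f"
  by (simp add: coord_diff_square_boolean influence_eq_measure_pivotal sets_pivotal)

lemma variance_boolean_fun: "boolean_fun f \<Longrightarrow> Var f = 1 - (mean f)^2"
proof -
  assume f: "boolean_fun f"
  then have "Var f = mean (\<lambda>\<omega>. (1 - 2 * mean f * f \<omega>) + (mean f)^2)"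
    unfolding Var_def by (simp add: power2_eq_square algebra_simps boolean_fun_square[OF f, simplified power2_eq_square])
  also have "\<dots> = 1 - (mean f)^2"
    using bounded_rv_boolean_fun[OF f] by (simp add: mean_add mean_diff bounded_rv_diff bounded_rv_cmult power2_eq_square)
  finally show ?thesis .
qed

lemma le_mult_sqrt_of_pow4_le:
  fixes p q :: real
  assumes "0 \<le> p" "0 \<le> q" and pow4: "q^4 \<le> p^3 * q^2"
  shows "q \<le> p * sqrt p"
proof -
  have "q^2 \<le> p^3"
  proof (cases "q = 0")
    case False
    then have "q^2 * q^2 \<le> p^3 * q^2" using pow4 by (simp add: power2_eq_square power4_eq_xxxx mult.assoc)
    moreover have "0 < q^2" using False by simp
    ultimately show ?thesis by (rule mult_right_le_imp_le)
  qed (use \<open>0 \<le> p\<close> in simp)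
  then have "sqrt (q^2) \<le> sqrt (p^3)" by (rule real_sqrt_le_mono)
  then show ?thesis using assms(1,2) by (simp add: power3_eq_cube real_sqrt_mult)
qed

lemma sum_coeff_square_le_influence:
  assumes f: "boolean_fun f" and "k < n" and c: "proj n f = walsh_poly n c"
  shows "(\<Sum>S\<in>Pow {..<n}. if k \<in> S then (c S)^2 else 0) \<le> influence k f"
proof -
  have bf: "bounded_rv f" using f by (rule bounded_rv_boolean_fun)
  have "(\<Sum>S\<in>Pow {..<n}. if k \<in> S then (c S)^2 else 0) = mean (\<lambda>\<omega>. (coord_diff k (walsh_poly n c) \<omega>)^2)"
    unfolding coord_diff_walsh_poly power2_eq_square mean_walsh_poly_mult by (simp add: if_distrib cong: if_cong)
  also have "\<dots> = mean (\<lambda>\<omega>. (proj n (coord_diff k f) \<omega>)^2)"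
    by (simp add: c[symmetric] proj_coord_diff[OF \<open>k < n\<close> bf])
  also have "\<dots> \<le> mean (\<lambda>\<omega>. (coord_diff k f \<omega>)^2)"
    by (intro mean_proj_square_le bounded_rv_coord_diff bf)
  finally show ?thesis by (simp add: mean_coord_diff_square[OF f])
qed

lemma noisy_sum_coeff_square_le_influence:
  assumes f: "boolean_fun f" and "k < n" and c: "proj n f = walsh_poly n c"
  shows "(\<Sum>S\<in>Pow {..<n}. if k \<in> S then (1/3)^card S * (c S)^2 else 0) \<le> influence k f * sqrt (influence k f)"
proof -
  define q where "q = (\<Sum>S\<in>Pow {..<n}. if k \<in> S then (1/3)^card S * (c S)^2 else 0)"
  define p where "p = influence k f"
  define u where "u = walsh_poly n (\<lambda>S. (1/3)^card S * (if k \<in> S then c S else 0))"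
  have bf: "bounded_rv f" using f by (rule bounded_rv_boolean_fun)
  have bu: "bounded_rv u" unfolding u_def by simp
  have q_sum: "q = (\<Sum>S\<in>Pow {..<n}. (1/3)^card S * (if k \<in> S then c S else 0)^2)"
    unfolding q_def by (intro sum.cong) auto
  have "q = mean (\<lambda>\<omega>. coord_diff k (walsh_poly n c) \<omega> * u \<omega>)"
    unfolding u_def coord_diff_walsh_poly mean_walsh_poly_mult q_def
    by (intro sum.cong) (auto simp: power2_eq_square)
  also have "\<dots> = mean (\<lambda>\<omega>. coord_diff k f \<omega> * u \<omega>)"
    unfolding c[symmetric] proj_coord_diff[OF \<open>k < n\<close> bf, symmetric]
    using bu by (intro mean_proj_mult bounded_rv_coord_diff bf) (simp_all add: u_def depends_on_first_walsh_poly)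
  finally have "q^4 \<le> p^3 * mean (\<lambda>\<omega>. u \<omega> ^ 4)"
    using mean_mult_pow4_le[OF bounded_rv_coord_diff[OF bf] bu coord_diff_cube_boolean[OF f]]
    by (simp add: mean_coord_diff_square[OF f] p_def)
  also have "\<dots> \<le> p^3 * q^2"
    unfolding q_sum u_def p_def
    by (intro mult_left_mono mean_fourth_power_noise_le) (simp add: influence_nonneg)
  finally show ?thesis
    unfolding q_def[symmetric] p_def[symmetric]
    by (rule le_mult_sqrt_of_pow4_le[rotated 2]) (auto simp: p_def q_def influence_nonneg intro: sum_nonneg)
qed

section \<open>The variance bound\<close>

lemma one_le_mult_tradeoff:
  fixes d :: real
  assumes "d > 0" and "m \<ge> 1"
  shows "1 \<le> real m * (1/d + 3 powr d * (1/3)^m)"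
proof (cases "real m \<ge> d")
  case True
  then have "1 \<le> real m * (1/d)" using \<open>d > 0\<close> by simp
  also have "\<dots> \<le> real m * (1/d + 3 powr d * (1/3)^m)" by (intro mult_left_mono) auto
  finally show ?thesis .
next
  case False
  have "3 powr d * (1/3)^m = 3 powr (d - real m)"
    by (simp add: powr_diff powr_realpow power_one_over)
  also have "\<dots> \<ge> 1" using False by (intro ge_one_powr_ge_zero) auto
  finally have "1 \<le> real m * (3 powr d * (1/3)^m)"
    using \<open>m \<ge> 1\<close> by (metis mult_mono' mult_1 of_nat_1 of_nat_le_iff zero_le_one)
  also have "\<dots> \<le> real m * (1/d + 3 powr d * (1/3)^m)" using \<open>d > 0\<close> by (intro mult_left_mono) auto
  finally show ?thesis .
qed

lemma sum_coeff_square_nonempty_le: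
  fixes d :: real and c :: "nat set \<Rightarrow> real"
  assumes "d > 0"
  shows "(\<Sum>S\<in>Pow {..<n} - {{}}. (c S)^2) \<le>
    (\<Sum>k<n. (1/d) * (\<Sum>S\<in>Pow {..<n}. if k \<in> S then (c S)^2 else 0)
       + 3 powr d * (\<Sum>S\<in>Pow {..<n}. if k \<in> S then (1/3)^card S * (c S)^2 else 0))"
proof -
  let ?w = "\<lambda>S. (c S)^2 * (1/d + 3 powr d * (1/3)^card S)"
  have "(\<Sum>S\<in>Pow {..<n} - {{}}. (c S)^2) \<le> (\<Sum>S\<in>Pow {..<n} - {{}}. real (card S) * ?w S)"
  proof (rule sum_mono)
    fix S assume S: "S \<in> Pow {..<n} - {{}}"
    then have "card S \<ge> 1" using finite_of_in_Pow_lessThan[of S n] by (auto simp: Suc_le_eq card_gt_0_iff)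
    then have "(c S)^2 * 1 \<le> (c S)^2 * (real (card S) * (1/d + 3 powr d * (1/3)^card S))"
      using one_le_mult_tradeoff[OF \<open>d > 0\<close>] by (intro mult_left_mono) auto
    then show "(c S)^2 \<le> real (card S) * ?w S" by (simp add: algebra_simps)
  qed
  also have "\<dots> = (\<Sum>S\<in>Pow {..<n}. real (card S) * ?w S)"
    by (rule sum.mono_neutral_left) auto
  also have "\<dots> = (\<Sum>S\<in>Pow {..<n}. \<Sum>k<n. if k \<in> S then ?w S else 0)"
  proof (rule sum.cong[OF refl])
    fix S assume "S \<in> Pow {..<n}"
    then have "{..<n} \<inter> S = S" by auto
    then show "real (card S) * ?w S = (\<Sum>k<n. if k \<in> S then ?w S else 0)"
      by (simp add: sum.If_cases Int_def)
  qed
  also have "\<dots> = (\<Sum>k<n. \<Sum>S\<in>Pow {..<n}. if k \<in> S then ?w S else 0)"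
    by (rule sum.swap)
  also have "\<dots> = (\<Sum>k<n. (1/d) * (\<Sum>S\<in>Pow {..<n}. if k \<in> S then (c S)^2 else 0)
       + 3 powr d * (\<Sum>S\<in>Pow {..<n}. if k \<in> S then (1/3)^card S * (c S)^2 else 0))"
    by (auto simp: sum_distrib_left sum.distrib[symmetric] algebra_simps intro!: sum.cong)
  finally show ?thesis .
qed

lemma proj_variance_le:
  assumes f: "boolean_fun f" and "d > 0" and \<delta>: "\<And>k. influence k f \<le> \<delta>"
  shows "mean (\<lambda>\<omega>. proj n f \<omega> ^ 2) - (mean f)^2 \<le> (\<Sum>k<n. influence k f) * (1/d + 3 powr d * sqrt \<delta>)"
proof -
  obtain c where c: "proj n f = walsh_poly n c"
    using walsh_poly_exists[OF depends_on_first_proj] by blast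
  have "mean (\<lambda>\<omega>. proj n f \<omega> ^ 2) - (mean f)^2 = (\<Sum>S\<in>Pow {..<n} - {{}}. (c S)^2)"
    using variance_walsh_poly[of n c] by (simp add: c[symmetric] mean_proj bounded_rv_boolean_fun[OF f])
  also have "\<dots> \<le> (\<Sum>k<n. (1/d) * (\<Sum>S\<in>Pow {..<n}. if k \<in> S then (c S)^2 else 0)
       + 3 powr d * (\<Sum>S\<in>Pow {..<n}. if k \<in> S then (1/3)^card S * (c S)^2 else 0))"
    by (rule sum_coeff_square_nonempty_le[OF \<open>d > 0\<close>])
  also have "\<dots> \<le> (\<Sum>k<n. influence k f * (1/d + 3 powr d * sqrt \<delta>))"
  proof (rule sum_mono)
    fix k assume "k \<in> {..<n}"
    then have "k < n" by simp
    have "influence k f * sqrt (influence k f) \<le> influence k f * sqrt \<delta>"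
      using \<delta>[of k] by (intro mult_left_mono real_sqrt_le_mono influence_nonneg)
    then have "(1/d) * (\<Sum>S\<in>Pow {..<n}. if k \<in> S then (c S)^2 else 0)
        + 3 powr d * (\<Sum>S\<in>Pow {..<n}. if k \<in> S then (1/3)^card S * (c S)^2 else 0)
        \<le> (1/d) * influence k f + 3 powr d * (influence k f * sqrt \<delta>)"
      using sum_coeff_square_le_influence[OF f \<open>k < n\<close> c]
        noisy_sum_coeff_square_le_influence[OF f \<open>k < n\<close> c] \<open>d > 0\<close>
      by (intro add_mono mult_left_mono) auto
    also have "\<dots> = influence k f * (1/d + 3 powr d * sqrt \<delta>)"
      by (simp add: algebra_simps)
    finally show "(1/d) * (\<Sum>S\<in>Pow {..<n}. if k \<in> S then (c S)^2 else 0)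
        + 3 powr d * (\<Sum>S\<in>Pow {..<n}. if k \<in> S then (1/3)^card S * (c S)^2 else 0)
        \<le> influence k f * (1/d + 3 powr d * sqrt \<delta>)" .
  qed
  also have "\<dots> = (\<Sum>k<n. influence k f) * (1/d + 3 powr d * sqrt \<delta>)"
    by (simp add: sum_distrib_right)
  finally show ?thesis .
qed

lemma sets_boolean_fun_eq_1: "boolean_fun f \<Longrightarrow> {\<omega>. f \<omega> = 1} \<in> sets cube"
  using borel_measurable_eq[of f cube "\<lambda>_. 1"] unfolding boolean_fun_def by simp

lemma variance_le_proj_variance:
  assumes f: "boolean_fun f"
  shows "Var f \<le> mean (\<lambda>\<omega>. proj n f \<omega> ^ 2) - (mean f)^2 + 2 * proj_error n {\<omega>. f \<omega> = 1}"
proof -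
  define A where "A = {\<omega>. f \<omega> = 1}"
  have A: "A \<in> sets cube" unfolding A_def using f by (rule sets_boolean_fun_eq_1)
  have bf: "bounded_rv f" using f by (rule bounded_rv_boolean_fun)
  have bA: "bounded_rv (indicator A)" using A by (rule bounded_rv_indicator)
  have f_indicator: "f = (\<lambda>\<omega>. 2 * indicator A \<omega> - 1)"
    using boolean_fun_values[OF f] by (force simp: A_def indicator_def)
  have proj_f: "proj n f \<omega> = 2 * proj n (indicator A) \<omega> - 1" for \<omega>
    using bounded_rv_comb_seq[OF bA] by (subst f_indicator) (simp add: proj_def mean_diff bounded_rv_cmult)
  have "1 - 2 * \<bar>proj n (indicator A) \<omega> - indicator A \<omega>\<bar> \<le> f \<omega> * proj n f \<omega>" for \<omega>
    using boolean_fun_values[OF f, of \<omega>] by (auto simp: proj_f A_def abs_if)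
  then have "mean (\<lambda>\<omega>. 1 - 2 * \<bar>proj n (indicator A) \<omega> - indicator A \<omega>\<bar>) \<le> mean (\<lambda>\<omega>. f \<omega> * proj n f \<omega>)"
    using bA bf by (intro mean_mono bounded_rv_diff bounded_rv_cmult bounded_rv_abs bounded_rv_proj bounded_rv_mult) auto
  also have "\<dots> = mean (\<lambda>\<omega>. proj n f \<omega> ^ 2)"
    using mean_proj_mult[OF bf bounded_rv_proj[OF bf] depends_on_first_proj]
    by (simp add: power2_eq_square mult.commute)
  finally show ?thesis
    using bA by (simp add: variance_boolean_fun[OF f] proj_error_def A_def[symmetric] mean_diff
        bounded_rv_cmult bounded_rv_abs bounded_rv_diff bounded_rv_proj)
qed

lemma variance_le_influences:
  assumes f: "boolean_fun f" and "d > 0" and \<delta>: "\<And>k. influence k f \<le> \<delta>"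
    and summable: "summable (\<lambda>k. influence k f)"
  shows "Var f \<le> (\<Sum>k. influence k f) * (1/d + 3 powr d * sqrt \<delta>)"
proof -
  let ?K = "(\<Sum>k. influence k f) * (1/d + 3 powr d * sqrt \<delta>)"
  have "0 \<le> \<delta>" using \<delta>[of 0] influence_nonneg[of 0 f] by linarith
  have "Var f \<le> ?K + 2 * proj_error n {\<omega>. f \<omega> = 1}" for n
  proof -
    have "(\<Sum>k<n. influence k f) * (1/d + 3 powr d * sqrt \<delta>) \<le> ?K"
      using summable \<open>d > 0\<close> \<open>0 \<le> \<delta>\<close>
      by (intro mult_right_mono sum_le_suminf) (auto simp: influence_nonneg)
    then show ?thesis
      using variance_le_proj_variance[OF f, of n] proj_variance_le[OF f \<open>d > 0\<close> \<delta>, of n] by linarith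
  qed
  moreover have "(\<lambda>n. ?K + 2 * proj_error n {\<omega>. f \<omega> = 1}) \<longlonglongrightarrow> ?K"
    using tendsto_add[OF tendsto_const tendsto_mult_right_zero[OF proj_error_tendsto_0[OF sets_boolean_fun_eq_1[OF f]]]]
    by simp
  ultimately show ?thesis
    by (intro LIMSEQ_le_const) auto
qed

lemma mult_ln_le_of_tradeoff:
  fixes V I \<delta> :: real
  assumes "0 < \<delta>" "\<delta> < 1" "0 \<le> I" and bound: "\<And>d. d > 0 \<Longrightarrow> V \<le> I * (1/d + 3 powr d * sqrt \<delta>)"
  shows "V * ln (1/\<delta>) \<le> 12 * I"
proof -
  define L where "L = ln (1/\<delta>)"
  have "L > 0" unfolding L_def using assms(1,2) by simp
  define d where "d = L / (4 * ln 3)"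
  have "d > 0" using \<open>L > 0\<close> by (simp add: d_def)
  have "3 powr d = exp (L/4)" by (simp add: d_def powr_def)
  moreover have "sqrt \<delta> = exp (- (L/2))"
    using \<open>0 < \<delta>\<close> by (simp add: L_def ln_div powr_def flip: powr_half_sqrt)
  ultimately have "3 powr d * sqrt \<delta> = exp (- (L/4))" by (simp flip: exp_add)
  then have "V \<le> I * (4 * ln 3 / L + exp (- (L/4)))"
    using bound[OF \<open>d > 0\<close>] by (simp add: d_def)
  then have "V * L \<le> I * (4 * ln 3 + L * exp (- (L/4)))"
    using \<open>L > 0\<close> by (simp add: field_simps)
  also have "\<dots> \<le> I * (4 * 2 + 4)"
  proof -
    have "exp (2::real) \<ge> 3" using exp_ge_add_one_self[of 2] by simp
    then have "ln 3 \<le> (2::real)" by (metis exp_gt_zero ln_exp ln_le_cancel_iff zero_less_numeral)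
    moreover have "L * exp (- (L/4)) \<le> 4"
    proof -
      have "L/4 \<le> exp (L/4)" using exp_ge_add_one_self[of "L/4"] by linarith
      then show ?thesis by (simp add: exp_minus field_simps)
    qed
    ultimately show ?thesis using \<open>0 \<le> I\<close> by (intro mult_left_mono add_mono) auto
  qed
  finally show ?thesis by (simp add: L_def)
qed

lemma variance_mult_ln_le_influences:
  assumes f: "boolean_fun f" and summable: "summable (\<lambda>k. influence k f)"
    and pos: "0 < (SUP k. influence k f)"
  shows "Var f * ln (1 / (SUP k. influence k f)) \<le> 12 * (\<Sum>k. influence k f)"
proof -
  define \<delta> where "\<delta> = (SUP k. influence k f)"
  have "bdd_above (range (\<lambda>k. influence k f))"
    by (intro bdd_aboveI2[where M=1]) (simp add: influence_def)
  then have \<delta>: "influence k f \<le> \<delta>" for k unfolding \<delta>_def by (rule cSUP_upper[OF UNIV_I])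
  have I: "0 \<le> (\<Sum>k. influence k f)" by (intro suminf_nonneg summable influence_nonneg)
  have V: "0 \<le> Var f" unfolding Var_def by (rule mean_nonneg) simp
  show ?thesis
  proof (cases "\<delta> < 1")
    case True
    then show ?thesis
      using variance_le_influences[OF f _ \<delta> summable] pos I
      by (intro mult_ln_le_of_tradeoff) (auto simp: \<delta>_def)
  next
    case False
    then have "ln (1 / \<delta>) \<le> 0" using pos by (simp add: \<delta>_def)
    with V have "Var f * ln (1 / \<delta>) \<le> 0" by (rule mult_nonneg_nonpos)
    then show ?thesis using I unfolding \<delta>_def by linarith
  qed
qed

theorem mainTheorem16:
  shows "\<exists>c>0. \<forall>f. boolean_fun f \<longrightarrow> (SUP i. influence i f) > 0 \<longrightarrow>
           ennreal (c * Var f * ln (1 / (SUP i. influence i f))) \<le> total_influence f"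
proof (intro exI[of _ "1/12"] conjI allI impI)
  fix f assume f: "boolean_fun f" and pos: "(SUP i. influence i f) > 0"
  show "ennreal (1/12 * Var f * ln (1 / (SUP i. influence i f))) \<le> total_influence f"
  proof (cases "total_influence f = \<top>")
    case False
    then have summable: "summable (\<lambda>k. influence k f)"
      unfolding total_influence_def by (intro summable_suminf_not_top influence_nonneg)
    then have "total_influence f = ennreal (\<Sum>k. influence k f)"
      unfolding total_influence_def by (intro suminf_ennreal2 influence_nonneg)
    then show ?thesis
      using variance_mult_ln_le_influences[OF f summable pos] by (auto intro: ennreal_leI)
  qed simp
qed simp

end
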